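(* Let $((A,\cdot),N)$ be a Nijenhuis algebra, $((M,\triangleright,\triangleleft),N_M)$ a Nijenhuis bimodule, and $0\to((M,0),N_M)\xrightarrow{i}((E,\cdot_E),N_E)\xrightarrow{p}((A,\cdot),N)\to0$ an abelian extension inducing this bimodule structure. Then there is a group isomorphism $\mathrm{Aut}_{M,A}(E,N_E)\cong Z^1_{\mathrm{NAlg}}((A,N);(M,N_M))$. Consequently the group $\mathrm{Aut}_{M,A}(E,N_E)$ is abelian.
   Context: Over a field of characteristic $0$. Nijenhuis algebra: associative $(A,\cdot)$ with linear $N$, $N(a)N(b)=N(N(a)b+aN(b)-N(ab))$; Nijenhuis bimodule: $A$-bimodule with linear $N_M$, $N(a)\triangleright N_M(u)=N_M(N(a)\triangleright u+a\triangleright N_M(u)-N_M(a\triangleright u))$, $N_M(u)\triangleleft N(a)=N_M(N_M(u)\triangleleft a+u\triangleleft N(a)-N_M(u\triangleleft a))$. Abelian extension: Nijenhuis algebra $E$ with a short exact sequence of Nijenhuis algebra homomorphisms (algebra maps commuting with the operators) as displayed ($M$ with zero multiplication, identified with $i(M)$), such that for any linear section $s$ of $p$, $a\triangleright u=s(a)\cdot_Eu$ and $u\triangleleft a=u\cdot_Es(a)$. $\mathrm{Aut}_{M,A}(E,N_E)$ is the group (under composition) of Nijenhuis algebra automorphisms $\varphi$ of $E$ with $\varphi(M)\subseteq M$, $\varphi|_M=\mathrm{Id}_M$ and $p\varphi s=\mathrm{Id}_A$. $Z^1_{\mathrm{NAlg}}((A,N);(M,N_M))$ is the additive group of linear maps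 $d:A\to M$ with $d(a\cdot b)=a\triangleright d(b)+d(a)\triangleleft b$ for all $a,b$ and $N_M\circ d=d\circ N$ (the 1-cocycles of the Nijenhuis algebra cohomology). *)

theory Defs
  imports Complex_Main "HOL-Algebra.Group"
begin

definition bilinear_op ::
  "('k::field \<Rightarrow> 'a::ab_group_add \<Rightarrow> 'a) \<Rightarrow> ('k \<Rightarrow> 'b::ab_group_add \<Rightarrow> 'b) \<Rightarrow>
   ('k \<Rightarrow> 'c::ab_group_add \<Rightarrow> 'c) \<Rightarrow> ('a \<Rightarrow> 'b \<Rightarrow> 'c) \<Rightarrow> bool" where
  "bilinear_op sa sb sc f \<longleftrightarrow>
     (\<forall>a. Vector_Spaces.linear sb sc (f a)) \<and> (\<forall>b. Vector_Spaces.linear sa sc (\<lambda>a. f a b))"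

definition assoc_algebra ::
  "('k::field \<Rightarrow> 'a::ab_group_add \<Rightarrow> 'a) \<Rightarrow> ('a \<Rightarrow> 'a \<Rightarrow> 'a) \<Rightarrow> bool" where
  "assoc_algebra s mul \<longleftrightarrow> vector_space s \<and> bilinear_op s s s mul \<and>
     (\<forall>a b c. mul (mul a b) c = mul a (mul b c))"

definition nijenhuis_algebra ::
  "('k::field \<Rightarrow> 'a::ab_group_add \<Rightarrow> 'a) \<Rightarrow> ('a \<Rightarrow> 'a \<Rightarrow> 'a) \<Rightarrow> ('a \<Rightarrow> 'a) \<Rightarrow> bool" where
  "nijenhuis_algebra s mul N \<longleftrightarrow> assoc_algebra s mul \<and> Vector_Spaces.linear s s N \<and>
     (\<forall>a b. mul (N a) (N b) = N (mul (N a) b + mul a (N b) - N (mul a b)))"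

definition bimodule ::
  "('k::field \<Rightarrow> 'a::ab_group_add \<Rightarrow> 'a) \<Rightarrow> ('a \<Rightarrow> 'a \<Rightarrow> 'a) \<Rightarrow>
   ('k \<Rightarrow> 'm::ab_group_add \<Rightarrow> 'm) \<Rightarrow> ('a \<Rightarrow> 'm \<Rightarrow> 'm) \<Rightarrow> ('m \<Rightarrow> 'a \<Rightarrow> 'm) \<Rightarrow> bool" where
  "bimodule sA mul sM l r \<longleftrightarrow> vector_space sM \<and>
     bilinear_op sA sM sM l \<and> bilinear_op sM sA sM r \<and>
     (\<forall>a b u. l (mul a b) u = l a (l b u)) \<and>
     (\<forall>a b u. r u (mul a b) = r (r u a) b) \<and>
     (\<forall>a b u. r (l a u) b = l a (r u b))"

definition nijenhuis_bimodule ::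
  "('k::field \<Rightarrow> 'a::ab_group_add \<Rightarrow> 'a) \<Rightarrow> ('a \<Rightarrow> 'a \<Rightarrow> 'a) \<Rightarrow> ('a \<Rightarrow> 'a) \<Rightarrow>
   ('k \<Rightarrow> 'm::ab_group_add \<Rightarrow> 'm) \<Rightarrow> ('a \<Rightarrow> 'm \<Rightarrow> 'm) \<Rightarrow> ('m \<Rightarrow> 'a \<Rightarrow> 'm) \<Rightarrow> ('m \<Rightarrow> 'm) \<Rightarrow> bool" where
  "nijenhuis_bimodule sA mul N sM l r NM \<longleftrightarrow> bimodule sA mul sM l r \<and>
     Vector_Spaces.linear sM sM NM \<and>
     (\<forall>a u. l (N a) (NM u) = NM (l (N a) u + l a (NM u) - NM (l a u))) \<and>
     (\<forall>a u. r (NM u) (N a) = NM (r (NM u) a + r u (N a) - NM (r u a)))"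

definition abelian_extension ::
  "('k::field \<Rightarrow> 'a::ab_group_add \<Rightarrow> 'a) \<Rightarrow> ('a \<Rightarrow> 'a \<Rightarrow> 'a) \<Rightarrow> ('a \<Rightarrow> 'a) \<Rightarrow>
   ('k \<Rightarrow> 'm::ab_group_add \<Rightarrow> 'm) \<Rightarrow> ('a \<Rightarrow> 'm \<Rightarrow> 'm) \<Rightarrow> ('m \<Rightarrow> 'a \<Rightarrow> 'm) \<Rightarrow> ('m \<Rightarrow> 'm) \<Rightarrow>
   ('k \<Rightarrow> 'e::ab_group_add \<Rightarrow> 'e) \<Rightarrow> ('e \<Rightarrow> 'e \<Rightarrow> 'e) \<Rightarrow> ('e \<Rightarrow> 'e) \<Rightarrow>
   ('m \<Rightarrow> 'e) \<Rightarrow> ('e \<Rightarrow> 'a) \<Rightarrow> bool" where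
  "abelian_extension sA mul N sM l r NM sE mulE NE i p \<longleftrightarrow>
     nijenhuis_algebra sE mulE NE \<and>
     Vector_Spaces.linear sM sE i \<and> Vector_Spaces.linear sE sA p \<and>
     inj i \<and> surj p \<and> range i = {e. p e = 0} \<and>
     (\<forall>u v. i 0 = mulE (i u) (i v)) \<and>
     (\<forall>x y. p (mulE x y) = mul (p x) (p y)) \<and>
     (\<forall>u. NE (i u) = i (NM u)) \<and> (\<forall>x. p (NE x) = N (p x)) \<and>
     (\<forall>s. Vector_Spaces.linear sA sE s \<and> (\<forall>a. p (s a) = a) \<longrightarrow>
        (\<forall>a u. i (l a u) = mulE (s a) (i u) \<and> i (r u a) = mulE (i u) (s a)))"

definition Aut_MA ::
  "('k::field \<Rightarrow> 'a::ab_group_add \<Rightarrow> 'a) \<Rightarrow> ('k \<Rightarrow> 'e::ab_group_add \<Rightarrow> 'e) \<Rightarrow>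
   ('e \<Rightarrow> 'e \<Rightarrow> 'e) \<Rightarrow> ('e \<Rightarrow> 'e) \<Rightarrow> ('m \<Rightarrow> 'e) \<Rightarrow> ('e \<Rightarrow> 'a) \<Rightarrow> ('e \<Rightarrow> 'e) set" where
  "Aut_MA sA sE mulE NE i p = {\<phi>.
     Vector_Spaces.linear sE sE \<phi> \<and> bij \<phi> \<and>
     (\<forall>x y. \<phi> (mulE x y) = mulE (\<phi> x) (\<phi> y)) \<and> (\<forall>x. \<phi> (NE x) = NE (\<phi> x)) \<and>
     \<phi> ` range i \<subseteq> range i \<and> (\<forall>u. \<phi> (i u) = i u) \<and>
     (\<forall>s. Vector_Spaces.linear sA sE s \<and> (\<forall>a. p (s a) = a) \<longrightarrow> (\<forall>a. p (\<phi> (s a)) = a))}"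

definition Aut_MA_group ::
  "('k::field \<Rightarrow> 'a::ab_group_add \<Rightarrow> 'a) \<Rightarrow> ('k \<Rightarrow> 'e::ab_group_add \<Rightarrow> 'e) \<Rightarrow>
   ('e \<Rightarrow> 'e \<Rightarrow> 'e) \<Rightarrow> ('e \<Rightarrow> 'e) \<Rightarrow> ('m \<Rightarrow> 'e) \<Rightarrow> ('e \<Rightarrow> 'a) \<Rightarrow> ('e \<Rightarrow> 'e) monoid" where
  "Aut_MA_group sA sE mulE NE i p =
     \<lparr>carrier = Aut_MA sA sE mulE NE i p, mult = (\<circ>), one = id\<rparr>"

definition Z1_NAlg ::
  "('a \<Rightarrow> 'a \<Rightarrow> 'a) \<Rightarrow> ('a \<Rightarrow> 'a) \<Rightarrow> ('k::field \<Rightarrow> 'a::ab_group_add \<Rightarrow> 'a) \<Rightarrow>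
   ('k \<Rightarrow> 'm::ab_group_add \<Rightarrow> 'm) \<Rightarrow> ('a \<Rightarrow> 'm \<Rightarrow> 'm) \<Rightarrow> ('m \<Rightarrow> 'a \<Rightarrow> 'm) \<Rightarrow> ('m \<Rightarrow> 'm) \<Rightarrow>
   ('a \<Rightarrow> 'm) set" where
  "Z1_NAlg mul N sA sM l r NM = {d.
     Vector_Spaces.linear sA sM d \<and>
     (\<forall>a b. d (mul a b) = l a (d b) + r (d a) b) \<and> (\<forall>a. NM (d a) = d (N a))}"

definition Z1_NAlg_group ::
  "('a \<Rightarrow> 'a \<Rightarrow> 'a) \<Rightarrow> ('a \<Rightarrow> 'a) \<Rightarrow> ('k::field \<Rightarrow> 'a::ab_group_add \<Rightarrow> 'a) \<Rightarrow>
   ('k \<Rightarrow> 'm::ab_group_add \<Rightarrow> 'm) \<Rightarrow> ('a \<Rightarrow> 'm \<Rightarrow> 'm) \<Rightarrow> ('m \<Rightarrow> 'a \<Rightarrow> 'm) \<Rightarrow> ('m \<Rightarrow> 'm) \<Rightarrow>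
   ('a \<Rightarrow> 'm) monoid" where
  "Z1_NAlg_group mul N sA sM l r NM =
     \<lparr>carrier = Z1_NAlg mul N sA sM l r NM, mult = (\<lambda>d d' a. d a + d' a), one = (\<lambda>a. 0)\<rparr>"

end

theory Submission
  imports Defs
begin

text \<open>An automorphism \<phi> in Aut_{M,A}(E,N_E) fixes M pointwise and induces the identity on
  A = E/M, so \<phi> - id vanishes on M and takes values in M; hence \<phi> = id + i \<circ> d \<circ> p for a
  unique linear d : A \<rightarrow> M. Expanding products with M \<cdot> M = 0, such a map is multiplicative
  iff d is a derivation and commutes with N_E iff N_M \<circ> d = d \<circ> N. Since
  (id + i d p) \<circ> (id + i d' p) = id + i (d + d') p, the map d \<mapsto> id + i d p is an
  isomorphism from the additive group Z^1 onto Aut_{M,A}(E,N_E), which is therefore abelian.\<close>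

lemmas linear_map_add = module_hom.add[OF module_hom_linearI]
  and linear_map_zero = module_hom.zero[OF module_hom_linearI]
  and linear_map_neg = module_hom.neg[OF module_hom_linearI]

lemma linear_of_injective_comp:
  assumes g: "Vector_Spaces.linear s2 s3 g" and "inj g"
    and gf: "Vector_Spaces.linear s1 s3 (g \<circ> f)"
  shows "Vector_Spaces.linear s1 s2 f"
proof -
  interpret vector_space_pair s2 s3
    using g by (simp add: vector_space_pair_def Vector_Spaces.linear_iff)
  obtain h where h: "Vector_Spaces.linear s3 s2 h" and "h \<circ> g = id"
    using linear_injective_left_inverse[OF g \<open>inj g\<close>] by blast
  have "Vector_Spaces.linear s1 s2 (h \<circ> (g \<circ> f))"
    using gf h by (rule Vector_Spaces.linear_compose)
  with \<open>h \<circ> g = id\<close> show ?thesis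
    by (simp flip: comp_assoc)
qed

context
  fixes sA :: "'k::field \<Rightarrow> 'a::ab_group_add \<Rightarrow> 'a" and sM :: "'k \<Rightarrow> 'm::ab_group_add \<Rightarrow> 'm"
    and l :: "'a \<Rightarrow> 'm \<Rightarrow> 'm" and r :: "'m \<Rightarrow> 'a \<Rightarrow> 'm" and NM :: "'m \<Rightarrow> 'm"
  assumes vs: "vector_space_pair sA sM"
    and linear_l: "\<And>a. Vector_Spaces.linear sM sM (l a)"
    and linear_r: "\<And>a. Vector_Spaces.linear sM sM (\<lambda>u. r u a)"
    and linear_NM: "Vector_Spaces.linear sM sM NM"
begin

interpretation vector_space_pair sA sM by (fact vs)

lemma Z1_NAlg_zero: "(\<lambda>a. 0) \<in> Z1_NAlg mul N sA sM l r NM"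
  using linear_map_zero[OF linear_l] linear_map_zero[OF linear_r] linear_map_zero[OF linear_NM]
  by (simp add: Z1_NAlg_def linear_zero)

lemma Z1_NAlg_add:
  assumes "d \<in> Z1_NAlg mul N sA sM l r NM" and "d' \<in> Z1_NAlg mul N sA sM l r NM"
  shows "(\<lambda>a. d a + d' a) \<in> Z1_NAlg mul N sA sM l r NM"
  using assms linear_map_add[OF linear_l] linear_map_add[OF linear_r] linear_map_add[OF linear_NM]
  by (simp add: Z1_NAlg_def linear_compose_add add_ac)

lemma Z1_NAlg_neg:
  assumes "d \<in> Z1_NAlg mul N sA sM l r NM"
  shows "(\<lambda>a. - d a) \<in> Z1_NAlg mul N sA sM l r NM"
  using assms linear_map_neg[OF linear_l] linear_map_neg[OF linear_r] linear_map_neg[OF linear_NM]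
  by (simp add: Z1_NAlg_def linear_compose_neg)

lemma comm_group_Z1_NAlg_group: "comm_group (Z1_NAlg_group mul N sA sM l r NM)" (is "comm_group ?Z")
proof (rule comm_groupI)
  fix d assume "d \<in> carrier ?Z"
  then show "\<exists>d'\<in>carrier ?Z. d' \<otimes>\<^bsub>?Z\<^esub> d = \<one>\<^bsub>?Z\<^esub>"
    by (intro bexI[of _ "\<lambda>a. - d a"]) (auto simp: Z1_NAlg_group_def Z1_NAlg_neg)
qed (auto simp: Z1_NAlg_group_def Z1_NAlg_zero Z1_NAlg_add add_ac)

end

locale nijenhuis_abelian_extension =
  fixes sA :: "'k::field \<Rightarrow> 'a::ab_group_add \<Rightarrow> 'a"
    and mul :: "'a \<Rightarrow> 'a \<Rightarrow> 'a" and N :: "'a \<Rightarrow> 'a"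
    and sM :: "'k \<Rightarrow> 'm::ab_group_add \<Rightarrow> 'm"
    and l :: "'a \<Rightarrow> 'm \<Rightarrow> 'm" and r :: "'m \<Rightarrow> 'a \<Rightarrow> 'm" and NM :: "'m \<Rightarrow> 'm"
    and sE :: "'k \<Rightarrow> 'e::ab_group_add \<Rightarrow> 'e"
    and mulE :: "'e \<Rightarrow> 'e \<Rightarrow> 'e" and NE :: "'e \<Rightarrow> 'e"
    and i :: "'m \<Rightarrow> 'e" and p :: "'e \<Rightarrow> 'a"
  assumes extension: "abelian_extension sA mul N sM l r NM sE mulE NE i p"
begin

lemma linear_i: "Vector_Spaces.linear sM sE i"
  and linear_p: "Vector_Spaces.linear sE sA p"
  and linear_NE: "Vector_Spaces.linear sE sE NE"
  and inj_i: "inj i"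
  and surj_p: "surj p"
  and range_i: "range i = {e. p e = 0}"
  and p_mult [simp]: "p (mulE x y) = mul (p x) (p y)"
  and NE_i: "NE (i u) = i (NM u)"
  and p_NE [simp]: "p (NE x) = N (p x)"
  using extension by (simp_all add: abelian_extension_def nijenhuis_algebra_def)

lemma linear_mulE_left: "Vector_Spaces.linear sE sE (mulE x)"
  and linear_mulE_right: "Vector_Spaces.linear sE sE (\<lambda>y. mulE y x)"
  using extension
  by (simp_all add: abelian_extension_def nijenhuis_algebra_def assoc_algebra_def bilinear_op_def)

sublocale i: Vector_Spaces.linear sM sE i by (fact linear_i)
sublocale p: Vector_Spaces.linear sE sA p by (fact linear_p)
sublocale NE: Vector_Spaces.linear sE sE NE by (fact linear_NE)

lemma mulE_i_i [simp]: "mulE (i u) (i v) = 0"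
  using extension by (simp add: abelian_extension_def)

lemma p_i [simp]: "p (i u) = 0"
  using range_i by auto

lemma i_inject [simp]: "i u = i v \<longleftrightarrow> u = v"
  using inj_i by (simp add: inj_eq)

definition lift :: "'a \<Rightarrow> 'e" where
  "lift = (SOME s. Vector_Spaces.linear sA sE s \<and> p \<circ> s = id)"

lemma linear_lift: "Vector_Spaces.linear sA sE lift"
  and p_lift [simp]: "p (lift a) = a"
proof -
  have "\<exists>s. Vector_Spaces.linear sA sE s \<and> p \<circ> s = id"
    using vector_space_pair.linear_surjective_right_inverse[OF _ linear_p surj_p] linear_p
    by (simp add: vector_space_pair_def Vector_Spaces.linear_iff)
  then have "Vector_Spaces.linear sA sE lift \<and> p \<circ> lift = id"
    unfolding lift_def by (rule someI_ex)
  then show "Vector_Spaces.linear sA sE lift" "p (lift a) = a"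
    by (auto simp: fun_eq_iff)
qed

lemma lift_decomposition: obtains u where "e = lift (p e) + i u"
proof -
  have "e - lift (p e) \<in> range i"
    using range_i by (simp add: p.diff)
  then show ?thesis
    by (metis that add.commute diff_add_cancel rangeE)
qed

lemma i_l_lift: "i (l a u) = mulE (lift a) (i u)"
  and i_r_lift: "i (r u a) = mulE (i u) (lift a)"
  using extension linear_lift unfolding abelian_extension_def by auto

lemma mulE_i_right: "mulE x (i u) = i (l (p x) u)"
proof -
  obtain w where "x = lift (p x) + i w" by (rule lift_decomposition)
  then have "mulE x (i u) = mulE (lift (p x)) (i u)"
    by (metis linear_map_add[OF linear_mulE_right] mulE_i_i add_0_right)
  also have "\<dots> = i (l (p x) u)"
    by (simp add: i_l_lift)
  finally show ?thesis .
qed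

lemma mulE_i_left: "mulE (i u) x = i (r u (p x))"
proof -
  obtain w where "x = lift (p x) + i w" by (rule lift_decomposition)
  then have "mulE (i u) x = mulE (i u) (lift (p x))"
    by (metis linear_map_add[OF linear_mulE_left] mulE_i_i add_0_right)
  also have "\<dots> = i (r u (p x))"
    by (simp add: i_r_lift)
  finally show ?thesis .
qed

lemma linear_l: "Vector_Spaces.linear sM sM (l a)"
proof (rule linear_of_injective_comp[OF linear_i inj_i])
  have "i \<circ> l a = mulE (lift a) \<circ> i"
    by (simp add: fun_eq_iff mulE_i_right)
  then show "Vector_Spaces.linear sM sE (i \<circ> l a)"
    using linear_i linear_mulE_left by (simp add: Vector_Spaces.linear_compose)
qed

lemma linear_r: "Vector_Spaces.linear sM sM (\<lambda>u. r u a)"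
proof (rule linear_of_injective_comp[OF linear_i inj_i])
  have "i \<circ> (\<lambda>u. r u a) = (\<lambda>y. mulE y (lift a)) \<circ> i"
    by (simp add: fun_eq_iff mulE_i_left)
  then show "Vector_Spaces.linear sM sE (i \<circ> (\<lambda>u. r u a))"
    using linear_i linear_mulE_right by (simp add: Vector_Spaces.linear_compose)
qed

lemma linear_NM: "Vector_Spaces.linear sM sM NM"
proof (rule linear_of_injective_comp[OF linear_i inj_i])
  have "i \<circ> NM = NE \<circ> i"
    by (simp add: fun_eq_iff NE_i)
  then show "Vector_Spaces.linear sM sE (i \<circ> NM)"
    using linear_i linear_NE by (simp add: Vector_Spaces.linear_compose)
qed

lemma vector_space_pair_AM: "vector_space_pair sA sM"
  by (simp add: vector_space_pair_def p.vs2.vector_space_axioms i.vs1.vector_space_axioms)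

lemmas Z1_zero = Z1_NAlg_zero[OF vector_space_pair_AM linear_l linear_r linear_NM]
  and Z1_add = Z1_NAlg_add[OF vector_space_pair_AM linear_l linear_r linear_NM]
  and comm_group_Z1 = comm_group_Z1_NAlg_group[OF vector_space_pair_AM linear_l linear_r linear_NM]

definition cocycle_aut :: "('a \<Rightarrow> 'm) \<Rightarrow> 'e \<Rightarrow> 'e" where
  "cocycle_aut d e = e + i (d (p e))"

lemma p_cocycle_aut [simp]: "p (cocycle_aut d e) = p e"
  by (simp add: cocycle_aut_def p.add)

lemma cocycle_aut_comp: "cocycle_aut d \<circ> cocycle_aut d' = cocycle_aut (\<lambda>a. d a + d' a)"
  by (simp add: fun_eq_iff cocycle_aut_def i.add p.add add_ac)

lemma cocycle_aut_zero: "cocycle_aut (\<lambda>a. 0) = id"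
  by (simp add: fun_eq_iff cocycle_aut_def)

lemma bij_cocycle_aut: "bij (cocycle_aut d)"
proof (rule o_bij)
  show "cocycle_aut d \<circ> cocycle_aut (\<lambda>a. - d a) = id" "cocycle_aut (\<lambda>a. - d a) \<circ> cocycle_aut d = id"
    by (simp_all add: cocycle_aut_comp cocycle_aut_zero)
qed

lemma inj_cocycle_aut: "inj cocycle_aut"
proof (rule injI)
  fix d d' assume "cocycle_aut d = cocycle_aut d'"
  then have "cocycle_aut d (lift a) = cocycle_aut d' (lift a)" for a
    by simp
  then show "d = d'"
    by (simp add: fun_eq_iff cocycle_aut_def)
qed

lemma mulE_cocycle_aut:
  "mulE (cocycle_aut d x) (cocycle_aut d y) = mulE x y + i (l (p x) (d (p y)) + r (d (p x)) (p y))"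
  by (simp add: cocycle_aut_def linear_map_add[OF linear_mulE_left] linear_map_add[OF linear_mulE_right]
      mulE_i_left mulE_i_right i.add p.add add_ac)

lemma cocycle_aut_mult_iff:
  "(\<forall>x y. cocycle_aut d (mulE x y) = mulE (cocycle_aut d x) (cocycle_aut d y)) \<longleftrightarrow>
   (\<forall>a b. d (mul a b) = l a (d b) + r (d a) b)"
proof
  assume "\<forall>x y. cocycle_aut d (mulE x y) = mulE (cocycle_aut d x) (cocycle_aut d y)"
  then have "cocycle_aut d (mulE (lift a) (lift b)) = mulE (cocycle_aut d (lift a)) (cocycle_aut d (lift b))"
    for a b by blast
  then show "\<forall>a b. d (mul a b) = l a (d b) + r (d a) b"
    by (simp add: mulE_cocycle_aut) (simp add: cocycle_aut_def)
qed (simp add: mulE_cocycle_aut, simp add: cocycle_aut_def)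

lemma cocycle_aut_NE_iff:
  "(\<forall>x. cocycle_aut d (NE x) = NE (cocycle_aut d x)) \<longleftrightarrow> (\<forall>a. NM (d a) = d (N a))"
proof -
  have "cocycle_aut d (NE x) = NE (cocycle_aut d x) \<longleftrightarrow> d (N (p x)) = NM (d (p x))" for x
    by (simp add: cocycle_aut_def NE.add NE_i)
  then show ?thesis
    by (metis p_lift)
qed

lemma linear_cocycle_aut_iff:
  "Vector_Spaces.linear sE sE (cocycle_aut d) \<longleftrightarrow> Vector_Spaces.linear sA sM d"
proof
  assume lin: "Vector_Spaces.linear sE sE (cocycle_aut d)"
  have "i \<circ> d = (\<lambda>a. cocycle_aut d (lift a) - lift a)"
    by (simp add: fun_eq_iff cocycle_aut_def)
  moreover have "Vector_Spaces.linear sA sE (\<lambda>a. cocycle_aut d (lift a) - lift a)"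
    using Vector_Spaces.linear_compose[OF linear_lift lin] linear_lift
    by (intro vector_space_pair.linear_compose_sub) (auto simp: vector_space_pair_def Vector_Spaces.linear_iff o_def)
  ultimately show "Vector_Spaces.linear sA sM d"
    by (intro linear_of_injective_comp[OF linear_i inj_i]) simp
next
  assume "Vector_Spaces.linear sA sM d"
  then have "Vector_Spaces.linear sE sE (i \<circ> d \<circ> p)"
    by (rule Vector_Spaces.linear_compose[OF linear_p Vector_Spaces.linear_compose[OF _ linear_i]])
  then show "Vector_Spaces.linear sE sE (cocycle_aut d)"
    using vector_space_pair.linear_compose_add[OF _ i.vs2.linear_ident]
    by (simp add: cocycle_aut_def[abs_def] vector_space_pair_def i.vs2.vector_space_axioms o_def)
qed

lemma cocycle_aut_in_Aut_MA_iff: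
  "cocycle_aut d \<in> Aut_MA sA sE mulE NE i p \<longleftrightarrow> d \<in> Z1_NAlg mul N sA sM l r NM"
proof -
  have fix_i: "cocycle_aut d (i u) = i u" if "Vector_Spaces.linear sA sM d" for u
    using that by (simp add: cocycle_aut_def linear_map_zero)
  show ?thesis
    unfolding Aut_MA_def Z1_NAlg_def
    using bij_cocycle_aut fix_i
    by (auto simp: linear_cocycle_aut_iff cocycle_aut_mult_iff cocycle_aut_NE_iff)
qed

lemma Aut_MA_subset_range_cocycle_aut: "Aut_MA sA sE mulE NE i p \<subseteq> range cocycle_aut"
proof
  fix \<phi> assume \<phi>: "\<phi> \<in> Aut_MA sA sE mulE NE i p"
  then have lin: "Vector_Spaces.linear sE sE \<phi>" and fix_i: "\<And>u. \<phi> (i u) = i u"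
    and p_lift: "\<And>a. p (\<phi> (lift a)) = a"
    using linear_lift by (auto simp: Aut_MA_def)
  define d where "d a = inv_into UNIV i (\<phi> (lift a) - lift a)" for a
  have i_d: "i (d a) = \<phi> (lift a) - lift a" for a
  proof -
    have "\<phi> (lift a) - lift a \<in> range i"
      using range_i by (simp add: p.diff p_lift)
    then show ?thesis
      by (simp add: d_def f_inv_into_f)
  qed
  have "\<phi> e = cocycle_aut d e" for e
  proof -
    obtain u where "e = lift (p e) + i u" by (rule lift_decomposition)
    then show ?thesis
      by (metis (no_types) cocycle_aut_def i_d fix_i linear_map_add[OF lin] diff_add_cancel add.commute add.assoc)
  qed
  then show "\<phi> \<in> range cocycle_aut"
    by blast
qed

lemma Aut_MA_eq_image: "Aut_MA sA sE mulE NE i p = cocycle_aut ` Z1_NAlg mul N sA sM l r NM"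
  using Aut_MA_subset_range_cocycle_aut cocycle_aut_in_Aut_MA_iff by blast

lemma cocycle_aut_iso:
  "cocycle_aut \<in> iso (Z1_NAlg_group mul N sA sM l r NM) (Aut_MA_group sA sE mulE NE i p)"
  unfolding iso_def hom_def bij_betw_def Z1_NAlg_group_def Aut_MA_group_def
  using cocycle_aut_in_Aut_MA_iff Aut_MA_eq_image inj_on_subset[OF inj_cocycle_aut subset_UNIV]
  by (auto simp: cocycle_aut_comp)

lemma monoid_Aut_MA_group: "monoid (Aut_MA_group sA sE mulE NE i p)"
proof (rule monoidI)
  show "\<one>\<^bsub>Aut_MA_group sA sE mulE NE i p\<^esub> \<in> carrier (Aut_MA_group sA sE mulE NE i p)"
    using cocycle_aut_in_Aut_MA_iff Z1_zero
    by (simp add: Aut_MA_group_def flip: cocycle_aut_zero)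
qed (auto simp: Aut_MA_group_def Aut_MA_eq_image cocycle_aut_comp Z1_add add.assoc)

end

theorem proposition5p5:
  fixes sA :: "'k::field_char_0 \<Rightarrow> 'a::ab_group_add \<Rightarrow> 'a"
    and mul :: "'a \<Rightarrow> 'a \<Rightarrow> 'a" and N :: "'a \<Rightarrow> 'a"
    and sM :: "'k \<Rightarrow> 'm::ab_group_add \<Rightarrow> 'm"
    and l :: "'a \<Rightarrow> 'm \<Rightarrow> 'm" and r :: "'m \<Rightarrow> 'a \<Rightarrow> 'm" and NM :: "'m \<Rightarrow> 'm"
    and sE :: "'k \<Rightarrow> 'e::ab_group_add \<Rightarrow> 'e"
    and mulE :: "'e \<Rightarrow> 'e \<Rightarrow> 'e" and NE :: "'e \<Rightarrow> 'e"
    and i :: "'m \<Rightarrow> 'e" and p :: "'e \<Rightarrow> 'a"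
  assumes "nijenhuis_algebra sA mul N"
    and "nijenhuis_bimodule sA mul N sM l r NM"
    and "abelian_extension sA mul N sM l r NM sE mulE NE i p"
  shows "group (Aut_MA_group sA sE mulE NE i p) \<and> group (Z1_NAlg_group mul N sA sM l r NM) \<and>
         Aut_MA_group sA sE mulE NE i p \<cong> Z1_NAlg_group mul N sA sM l r NM \<and>
         comm_group (Aut_MA_group sA sE mulE NE i p)"
proof -
  interpret nijenhuis_abelian_extension sA mul N sM l r NM sE mulE NE i p
    using assms(3) by (rule nijenhuis_abelian_extension.intro)
  have Z1_iso_Aut: "Z1_NAlg_group mul N sA sM l r NM \<cong> Aut_MA_group sA sE mulE NE i p"
    by (rule is_isoI[OF cocycle_aut_iso])
  have "comm_group (Aut_MA_group sA sE mulE NE i p)"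
    by (rule comm_group.iso_imp_comm_group[OF comm_group_Z1 Z1_iso_Aut monoid_Aut_MA_group])
  moreover have "Aut_MA_group sA sE mulE NE i p \<cong> Z1_NAlg_group mul N sA sM l r NM"
    using Z1_iso_Aut comm_group_Z1 by (simp add: comm_group_def group.iso_sym)
  ultimately show ?thesis
    using comm_group_Z1 by (simp add: comm_group_def)
qed

end
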